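(* Under the hypotheses (F1)–(F4), (G1)–(G2) of the context and for $\ell>0$, the set $\mathcal{N}_\ell$ of equilibrium (stationary) points of the Bresse system is bounded in $\mathcal{H}$. Here $y\in\mathcal{N}_\ell$ means $y=(\varphi,\psi,w,0,0,0)$ with $\varphi,\psi,w\in H^1_0(0,L)$ solving (weakly) $-k(\varphi_x+\psi+\ell w)_x-k_0\ell(w_x-\ell\varphi)+f_1(\varphi,\psi,w)=0$, $-b\psi_{xx}+k(\varphi_x+\psi+\ell w)+f_2(\varphi,\psi,w)=0$, $-k_0(w_x-\ell\varphi)_x+k\ell(\varphi_x+\psi+\ell w)+f_3(\varphi,\psi,w)=0$ on $(0,L)$.
   Context: Fix $L>0$, $\rho_1,\rho_2,b,k,k_0>0$, $\ell>0$; $\|\cdot\|$ is the $L^2(0,L)$ norm; $\mathcal{H}=H^1_0(0,L)^3\times L^2(0,L)^3$. The Bresse system is $\rho_1\varphi_{tt}-k(\varphi_x+\psi+\ell w)_x-k_0\ell(w_x-\ell\varphi)+g_1(\varphi_t)+f_1(\varphi,\psi,w)=0$, $\rho_2\psi_{tt}-b\psi_{xx}+k(\varphi_x+\psi+\ell w)+g_2(\psi_t)+f_2(\varphi,\psi,w)=0$, $\rho_1w_{tt}-k_0(w_x-\ell\varphi)_x+k\ell(\varphi_x+\psi+\ell w)+g_3(w_t)+f_3(\varphi,\psi,w)=0$ with Dirichlet boundary conditions. Let $\gamma_3>0$ satisfy $\|\varphi_x\|^2+\|\psi_x\|^2+\|w_x\|^2\le\gamma_3(b\|\psi_x\|^2+k\|\varphi_x+\psi+\ell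 w\|^2+k_0\|w_x-\ell\varphi\|^2)$ for all $\varphi,\psi,w\in H^1_0(0,L)$. Hypotheses: (F1) $F\in C^2(\mathbb{R}^3)$, $\nabla F=(f_1,f_2,f_3)$; (F2) there are $\beta,m_F\ge0$, $0\le\beta<\pi^2/(2\gamma_3L^2)$, with $F(u,v,w)\ge-\beta(u^2+v^2+w^2)-m_F$; (F3) there are $p\ge1$, $C_f>0$ with $|\nabla f_i(u,v,w)|\le C_f(1+|u|^{p-1}+|v|^{p-1}+|w|^{p-1})$; (F4) $\nabla F(u,v,w)\cdot(u,v,w)-F(u,v,w)\ge-\beta(u^2+v^2+w^2)-m_F$; (G1) $g_i\in C^1(\mathbb{R})$ increasing, $g_i(0)=0$; (G2) there are $m_i,M_i>0$ with $m_is^2\le g_i(s)s\le M_is^2$ for $|s|>1$. *)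

theory Defs
  imports "HOL-Analysis.Analysis"
begin

text \<open>Points of R^3 are represented as triples of type real \<times> real \<times> real,
whose product norm is the Euclidean norm.\<close>

definition L2 :: "real \<Rightarrow> (real \<Rightarrow> real) \<Rightarrow> bool" where
  "L2 L v \<longleftrightarrow> set_borel_measurable lborel {0..L} v \<and>
               set_integrable lborel {0..L} (\<lambda>x. (v x)\<^sup>2)"

definition nrm2 :: "real \<Rightarrow> (real \<Rightarrow> real) \<Rightarrow> real" where
  "nrm2 L v = (LINT x:{0..L}|lborel. (v x)\<^sup>2)"

text \<open>u belongs to H^1_0(0,L) with weak derivative u': u is the (absolutely continuous)
primitive of the L^2 function u' vanishing at both endpoints.\<close>
definition H10 :: "real \<Rightarrow> (real \<Rightarrow> real) \<Rightarrow> (real \<Rightarrow> real) \<Rightarrow> bool" where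
  "H10 L u u' \<longleftrightarrow> L2 L u' \<and> (\<forall>x\<in>{0..L}. u x = (LINT t:{0..x}|lborel. u' t)) \<and> u L = 0"

definition apow :: "real \<Rightarrow> real \<Rightarrow> real" where
  "apow x a = (if a = 0 then 1 else \<bar>x\<bar> powr a)"

definition equilibrium ::
  "real \<Rightarrow> real \<Rightarrow> real \<Rightarrow> real \<Rightarrow> real \<Rightarrow>
   (real \<times> real \<times> real \<Rightarrow> real) \<Rightarrow> (real \<times> real \<times> real \<Rightarrow> real) \<Rightarrow> (real \<times> real \<times> real \<Rightarrow> real) \<Rightarrow>
   (real \<Rightarrow> real) \<Rightarrow> (real \<Rightarrow> real) \<Rightarrow> (real \<Rightarrow> real) \<Rightarrow> (real \<Rightarrow> real) \<Rightarrow>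
   (real \<Rightarrow> real) \<Rightarrow> (real \<Rightarrow> real) \<Rightarrow> bool" where
  "equilibrium L b k k0 l f1 f2 f3 \<phi> \<phi>' \<psi> \<psi>' w w' \<longleftrightarrow>
     H10 L \<phi> \<phi>' \<and> H10 L \<psi> \<psi>' \<and> H10 L w w' \<and>
     (\<forall>\<xi> \<xi>'. H10 L \<xi> \<xi>' \<longrightarrow>
        (LINT x:{0..L}|lborel. k * (\<phi>' x + \<psi> x + l * w x) * \<xi>' x
            - k0 * l * (w' x - l * \<phi> x) * \<xi> x + f1 (\<phi> x, \<psi> x, w x) * \<xi> x) = 0 \<and>
        (LINT x:{0..L}|lborel. b * \<psi>' x * \<xi>' x
            + k * (\<phi>' x + \<psi> x + l * w x) * \<xi> x + f2 (\<phi> x, \<psi> x, w x) * \<xi> x) = 0 \<and>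
        (LINT x:{0..L}|lborel. k0 * (w' x - l * \<phi> x) * \<xi>' x
            + k * l * (\<phi>' x + \<psi> x + l * w x) * \<xi> x + f3 (\<phi> x, \<psi> x, w x) * \<xi> x) = 0)"

end

theory Submission
  imports Defs
begin

text \<open>Testing the three stationary equations with the solution itself and adding them gives the
energy identity  b |psi_x|^2 + k |phi_x + psi + l w|^2 + k0 |w_x - l phi|^2 + int grad F(u).u = 0,
with u = (phi, psi, w). By (F2) and (F4) the last integrand is at least -2 beta |u|^2 - 2 mF.
The Poincare inequality with its sharp constant (L/pi)^2, followed by the hypothesis on gamma3,
bounds |u|^2 by 2 beta gamma3 (L/pi)^2 times the energy, and this factor is < 1 by (F2).
Hence the energy, and with it the norm in H, is bounded by a constant depending only on the data.

The sharp Poincare inequality comes from a weighted Cauchy-Schwarz argument: u(x) is the integral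
of u' from x to the nearer endpoint, the weight is |cos(pi t/L)|, and Fubini returns the weight
multiplied by (L/pi)^2.\<close>

lemma set_integrable_const_Icc: "set_integrable lborel {a..b::real} (\<lambda>x. c::real)"
  unfolding set_integrable_def
  by (auto intro!: integrable_scaleR_left integrable_indicator simp: emeasure_lborel_Icc_eq)

lemma set_integral_const_Icc:
  fixes a b c :: real
  assumes "a \<le> b"
  shows "(LINT x:{a..b}|lborel. c) = c * (b - a)"
  using assms by (simp add: set_integral_const)

lemma L2_borel_measurable: "L2 L f \<Longrightarrow> (\<lambda>x. indicator {0..L} x * f x) \<in> borel_measurable borel"
  unfolding L2_def set_borel_measurable_def by simp

lemma L2_mult_set_integrable:
  assumes f: "L2 L f" and g: "L2 L g"
  shows "set_integrable lborel {0..L} (\<lambda>x. f x * g x)"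
proof (rule set_integrable_bound[where f="\<lambda>x. (f x)\<^sup>2 + (g x)\<^sup>2"])
  show "set_integrable lborel {0..L} (\<lambda>x. (f x)\<^sup>2 + (g x)\<^sup>2)"
    using f g unfolding L2_def by (intro set_integral_add) auto
  have [measurable]: "(\<lambda>x. indicator {0..L} x * f x) \<in> borel_measurable borel"
    "(\<lambda>x. indicator {0..L} x * g x) \<in> borel_measurable borel"
    using f g by (auto dest: L2_borel_measurable)
  have "(\<lambda>x. indicator {0..L} x *\<^sub>R (f x * g x))
      = (\<lambda>x. (indicator {0..L} x * f x) * (indicator {0..L} x * g x))"
    by (auto simp: indicator_def fun_eq_iff)
  then show "set_borel_measurable lborel {0..L} (\<lambda>x. f x * g x)"
    unfolding set_borel_measurable_def by simp
  have "\<bar>f x * g x\<bar> \<le> (f x)\<^sup>2 + (g x)\<^sup>2" for x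
  proof -
    have "2 * \<bar>f x\<bar> * \<bar>g x\<bar> \<le> (f x)\<^sup>2 + (g x)\<^sup>2"
      using sum_squares_bound[of "\<bar>f x\<bar>" "\<bar>g x\<bar>"] by simp
    moreover have "0 \<le> \<bar>f x\<bar> * \<bar>g x\<bar>" by simp
    ultimately show ?thesis unfolding abs_mult by linarith
  qed
  then show "AE x in lborel. x \<in> {0..L} \<longrightarrow> norm (f x * g x) \<le> norm ((f x)\<^sup>2 + (g x)\<^sup>2)"
    by auto
qed

lemma L2_set_integrable: "L2 L f \<Longrightarrow> set_integrable lborel {0..L} f"
  using L2_mult_set_integrable[of L f "\<lambda>_. 1"] set_integrable_const_Icc[of 0 L 1]
  unfolding L2_def set_borel_measurable_def by (auto simp: set_integrable_def)

lemma L2_add: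
  assumes f: "L2 L f" and g: "L2 L g"
  shows "L2 L (\<lambda>x. f x + g x)"
proof -
  have [measurable]: "(\<lambda>x. indicator {0..L} x * f x) \<in> borel_measurable borel"
    "(\<lambda>x. indicator {0..L} x * g x) \<in> borel_measurable borel"
    using f g by (auto dest: L2_borel_measurable)
  have "(\<lambda>x. indicator {0..L} x *\<^sub>R (f x + g x))
      = (\<lambda>x. indicator {0..L} x * f x + indicator {0..L} x * g x)"
    by (auto simp: indicator_def fun_eq_iff)
  moreover have "(\<lambda>x. (f x + g x)\<^sup>2) = (\<lambda>x. (f x)\<^sup>2 + (g x)\<^sup>2 + 2 * (f x * g x))"
    by (auto simp: fun_eq_iff power2_eq_square algebra_simps)
  moreover have "set_integrable lborel {0..L} (\<lambda>x. (f x)\<^sup>2 + (g x)\<^sup>2 + 2 * (f x * g x))"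
    using f g L2_mult_set_integrable[OF f g] unfolding L2_def
    by (intro set_integral_add set_integrable_mult_right) auto
  ultimately show ?thesis unfolding L2_def set_borel_measurable_def by simp
qed

lemma L2_cmult:
  assumes f: "L2 L f"
  shows "L2 L (\<lambda>x. c * f x)"
proof -
  have [measurable]: "(\<lambda>x. indicator {0..L} x * f x) \<in> borel_measurable borel"
    using f by (rule L2_borel_measurable)
  have "(\<lambda>x. indicator {0..L} x *\<^sub>R (c * f x)) = (\<lambda>x. c * (indicator {0..L} x * f x))"
    by (auto simp: indicator_def fun_eq_iff)
  moreover have "(\<lambda>x. (c * f x)\<^sup>2) = (\<lambda>x. c\<^sup>2 * (f x)\<^sup>2)"
    by (auto simp: fun_eq_iff power2_eq_square)
  moreover have "set_integrable lborel {0..L} (\<lambda>x. c\<^sup>2 * (f x)\<^sup>2)"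
    using f unfolding L2_def by (intro set_integrable_mult_right) auto
  ultimately show ?thesis unfolding L2_def set_borel_measurable_def by simp
qed

lemma L2_diff: "L2 L f \<Longrightarrow> L2 L g \<Longrightarrow> L2 L (\<lambda>x. f x - g x)"
  using L2_add[of L f "\<lambda>x. (-1) * g x"] L2_cmult[of L g "-1"] by simp

lemma continuous_on_imp_L2:
  assumes c: "continuous_on {0..L} f"
  shows "L2 L f"
proof -
  have "bounded (f ` {0..L})"
    using c by (intro compact_imp_bounded compact_continuous_image) auto
  then obtain B where B: "\<forall>x\<in>{0..L}. \<bar>f x\<bar> \<le> B"
    unfolding bounded_iff by force
  have m: "(\<lambda>x. indicator {0..L} x * f x) \<in> borel_measurable borel"
    using borel_measurable_continuous_on_indicator[OF _ c] by simp
  have "set_integrable lborel {0..L} (\<lambda>x. (f x)\<^sup>2)"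
  proof (rule set_integrable_bound[where f="\<lambda>x. B\<^sup>2"])
    show "set_integrable lborel {0..L} (\<lambda>x. B\<^sup>2)" by (rule set_integrable_const_Icc)
    have "(\<lambda>x. indicator {0..L} x *\<^sub>R (f x)\<^sup>2) = (\<lambda>x. (indicator {0..L} x * f x)\<^sup>2)"
      by (auto simp: indicator_def fun_eq_iff)
    then show "set_borel_measurable lborel {0..L} (\<lambda>x. (f x)\<^sup>2)"
      unfolding set_borel_measurable_def using m by simp
    have "x \<in> {0..L} \<Longrightarrow> \<bar>f x\<bar>\<^sup>2 \<le> B\<^sup>2" for x
      using B by (intro power_mono) auto
    then show "AE x in lborel. x \<in> {0..L} \<longrightarrow> norm ((f x)\<^sup>2) \<le> norm (B\<^sup>2)"
      by auto
  qed
  then show ?thesis using m unfolding L2_def set_borel_measurable_def by simp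
qed

lemma nrm2_nonneg: "nrm2 L f \<ge> 0"
  unfolding nrm2_def set_lebesgue_integral_def
  by (intro Bochner_Integration.integral_nonneg) (auto simp: indicator_def)

lemma nrm2_eq_nn_integral:
  "L2 L f \<Longrightarrow> ennreal (nrm2 L f) = (\<integral>\<^sup>+x. ennreal (indicator {0..L} x * (f x)\<^sup>2) \<partial>lborel)"
  unfolding nrm2_def set_lebesgue_integral_def L2_def set_integrable_def
  by (subst nn_integral_eq_integral) (auto simp: indicator_def)

lemma H10_continuous_on:
  assumes H: "H10 L u u'"
  shows "continuous_on {0..L} u"
proof -
  have u': "set_integrable lborel {0..L} u'"
    using H L2_set_integrable unfolding H10_def by blast
  have "u x = integral {0..x} u'" if x: "x \<in> {0..L}" for x
  proof -
    have "set_integrable lborel {0..x} u'"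
      by (rule set_integrable_subset[OF u']) (use x in auto)
    then show ?thesis
      using H x set_borel_integral_eq_integral(2) unfolding H10_def by auto
  qed
  moreover have "continuous_on {0..L} (\<lambda>x. integral {0..x} u')"
    using u' by (intro indefinite_integral_continuous_1 set_borel_integral_eq_integral(1))
  ultimately show ?thesis by (metis (no_types, lifting) continuous_on_cong)
qed

lemma H10_imp_L2: "H10 L u u' \<Longrightarrow> L2 L u"
  by (rule continuous_on_imp_L2[OF H10_continuous_on])

lemma set_integral_square_le_weighted:
  fixes v c :: "'a \<Rightarrow> real"
  assumes [measurable]: "A \<in> sets M" and v: "set_integrable M A v"
    and [measurable]: "c \<in> borel_measurable M"
    and c_nonneg: "\<And>t. 0 \<le> c t" and c_pos: "AE t in M. t \<in> A \<longrightarrow> 0 < c t"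
  shows "ennreal ((LINT t:A|M. v t)\<^sup>2)
    \<le> (\<integral>\<^sup>+t. ennreal (indicator A t * c t) \<partial>M) * (\<integral>\<^sup>+t. ennreal (indicator A t * ((v t)\<^sup>2 / c t)) \<partial>M)"
proof -
  have int: "integrable M (\<lambda>t. indicator A t * v t)"
    using v unfolding set_integrable_def by simp
  define h where "h t = indicator A t * v t" for t
  have [measurable]: "h \<in> borel_measurable M"
    using int unfolding h_def by (rule borel_measurable_integrable)
  define f where "f t = ennreal (\<bar>h t\<bar> / sqrt (c t))" for t
  define g where "g t = ennreal (indicator A t * sqrt (c t))" for t
  have [measurable]: "f \<in> borel_measurable M" "g \<in> borel_measurable M"
    unfolding f_def g_def by measurable
  have "ennreal \<bar>LINT t:A|M. v t\<bar> \<le> (\<integral>\<^sup>+t. ennreal (norm (indicator A t * v t)) \<partial>M)"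
    using integral_norm_bound_ennreal[OF int] unfolding set_lebesgue_integral_def by simp
  also have "\<dots> = (\<integral>\<^sup>+t. f t * g t \<partial>M)"
    using c_pos
  proof (intro nn_integral_cong_AE, eventually_elim)
    case (elim t)
    then show ?case
      by (cases "t \<in> A") (simp_all add: f_def g_def h_def ennreal_mult[symmetric] c_nonneg)
  qed
  finally have "(ennreal \<bar>LINT t:A|M. v t\<bar>)\<^sup>2 \<le> (\<integral>\<^sup>+t. f t * g t \<partial>M)\<^sup>2"
    by (intro power_mono) auto
  also have "\<dots> \<le> (\<integral>\<^sup>+t. (f t)\<^sup>2 \<partial>M) * (\<integral>\<^sup>+t. (g t)\<^sup>2 \<partial>M)"
    by (rule Cauchy_Schwarz_nn_integral) measurable
  also have "(\<integral>\<^sup>+t. (f t)\<^sup>2 \<partial>M) = (\<integral>\<^sup>+t. ennreal (indicator A t * ((v t)\<^sup>2 / c t)) \<partial>M)"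
    by (intro nn_integral_cong)
      (auto simp: f_def h_def ennreal_power c_nonneg power_divide power_mult_distrib indicator_def)
  also have "(\<integral>\<^sup>+t. (g t)\<^sup>2 \<partial>M) = (\<integral>\<^sup>+t. ennreal (indicator A t * c t) \<partial>M)"
    by (intro nn_integral_cong) (auto simp: g_def ennreal_power c_nonneg indicator_def)
  finally show ?thesis by (simp add: ennreal_power mult.commute)
qed

definition nearer_end_segment :: "real \<Rightarrow> real \<Rightarrow> real set" where
  "nearer_end_segment L x = (if x \<le> L/2 then {0..x} else {x<..L})"

lemma nearer_end_segment_subset: "x \<in> {0..L} \<Longrightarrow> nearer_end_segment L x \<subseteq> {0..L}"
  by (auto simp: nearer_end_segment_def)

lemma indicator_nearer_end_segment:
  "indicator (nearer_end_segment L x) t =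
    (of_bool (x \<le> L/2 \<and> 0 \<le> t \<and> t \<le> x \<or> \<not> x \<le> L/2 \<and> x < t \<and> t \<le> L) :: real)"
  by (auto simp: nearer_end_segment_def indicator_def)

lemma H10_abs_eq_integral_nearer_end:
  assumes H: "H10 L u u'" and x: "x \<in> {0..L}"
  shows "\<bar>u x\<bar> = \<bar>LINT t:nearer_end_segment L x|lborel. u' t\<bar>"
proof (cases "x \<le> L/2")
  case True
  then show ?thesis using H x by (simp add: H10_def nearer_end_segment_def)
next
  case False
  have u': "set_integrable lborel {0..L} u'"
    using H L2_set_integrable unfolding H10_def by blast
  have "0 = (LINT t:{0..L}|lborel. u' t)" using H x unfolding H10_def by auto
  also have "\<dots> = (LINT t:{0..x}|lborel. u' t) + (LINT t:{x<..L}|lborel. u' t)"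
  proof -
    have split: "{0..L} = {0..x} \<union> {x<..L}" using x by auto
    have "set_integrable lborel {0..x} u'" "set_integrable lborel {x<..L} u'"
      by (rule set_integrable_subset[OF u'], use x in auto)+
    then show ?thesis unfolding split by (intro set_integral_Un) auto
  qed
  also have "(LINT t:{0..x}|lborel. u' t) = u x" using H x unfolding H10_def by auto
  finally show ?thesis using False by (simp add: nearer_end_segment_def)
qed

lemma cos_scaled_nonneg:
  assumes "L > 0" "0 \<le> t" "t \<le> L/2"
  shows "0 \<le> cos (pi * t / L)"
proof -
  have "0 \<le> pi * t / L" "pi * t / L \<le> pi/2" using assms by (simp_all add: field_simps)
  then show ?thesis using pi_gt_zero by (intro cos_ge_zero) linarith+
qed

lemma cos_scaled_nonpos:
  assumes "L > 0" "L/2 \<le> t" "t \<le> L"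
  shows "cos (pi * t / L) \<le> 0"
proof -
  have "0 \<le> pi - pi * t / L" "pi - pi * t / L \<le> pi/2" using assms by (simp_all add: field_simps)
  then have "0 \<le> cos (pi - pi * t / L)" using pi_gt_zero by (intro cos_ge_zero) linarith+
  then show ?thesis by simp
qed

lemma cos_scaled_nonzero:
  assumes "L > 0" "t \<in> {0..L}" "t \<noteq> L/2"
  shows "cos (pi * t / L) \<noteq> 0"
proof (cases "t < L/2")
  case True
  have "0 \<le> pi * t / L" "pi * t / L < pi/2" using assms True by (simp_all add: field_simps)
  then show ?thesis using cos_gt_zero_pi[of "pi * t / L"] by simp
next
  case False
  have "0 \<le> pi - pi * t / L" "pi - pi * t / L < pi/2"
    using assms False by (simp_all add: field_simps)
  then show ?thesis using cos_gt_zero_pi[of "pi - pi * t / L"] by simp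
qed

lemma sin_scaled_nonneg: "L > 0 \<Longrightarrow> t \<in> {0..L} \<Longrightarrow> 0 \<le> sin (pi * t / L)"
  by (intro sin_ge_zero) (auto simp: field_simps)

lemma has_integral_real_derivative:
  assumes "a \<le> b" "\<And>x. (F has_real_derivative f x) (at x)"
  shows "(f has_integral (F b - F a)) {a..b}"
  using assms by (intro fundamental_theorem_of_calculus)
    (auto simp: has_real_derivative_iff_has_vector_derivative[symmetric]
          intro: has_field_derivative_at_within)

lemma has_real_derivative_sin_scaled:
  "L > 0 \<Longrightarrow> ((\<lambda>x. L/pi * sin (pi * x / L)) has_real_derivative cos (pi * t / L)) (at t)"
  by (auto intro!: derivative_eq_intros)

lemma has_real_derivative_cos_scaled:
  "L > 0 \<Longrightarrow> ((\<lambda>x. - (L/pi)\<^sup>2 * cos (pi * x / L)) has_real_derivative L/pi * sin (pi * t / L)) (at t)"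
  by (auto intro!: derivative_eq_intros simp: power2_eq_square)

lemma nn_integral_abs_cos_nearer_end_segment:
  assumes L: "L > 0" and x: "x \<in> {0..L}"
  shows "(\<integral>\<^sup>+t. ennreal (indicator (nearer_end_segment L x) t * \<bar>cos (pi * t / L)\<bar>) \<partial>lborel)
    = ennreal (L/pi * sin (pi * x / L))"
proof (cases "x \<le> L/2")
  case True
  have "((\<lambda>t. cos (pi * t / L)) has_integral (L/pi * sin (pi * x / L) - L/pi * sin (pi * 0 / L))) {0..x}"
    using x L by (intro has_integral_real_derivative has_real_derivative_sin_scaled) auto
  moreover have "\<bar>cos (pi * t / L)\<bar> = cos (pi * t / L)" if "t \<in> {0..x}" for t
    using that True L cos_scaled_nonneg[of L t] by simp
  ultimately have "((\<lambda>t. \<bar>cos (pi * t / L)\<bar>) has_integral L/pi * sin (pi * x / L)) {0..x}"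
    using has_integral_cong[of "{0..x}" "\<lambda>t. \<bar>cos (pi * t / L)\<bar>"] by simp
  then show ?thesis
    using True by (simp add: nearer_end_segment_def nn_integral_has_integral_lebesgue)
next
  case False
  have "((\<lambda>t. - cos (pi * t / L)) has_integral
      (- (L/pi * sin (pi * L / L)) - (- (L/pi * sin (pi * x / L))))) {x..L}"
    using x L by (intro has_integral_real_derivative DERIV_minus has_real_derivative_sin_scaled) auto
  moreover have "\<bar>cos (pi * t / L)\<bar> = - cos (pi * t / L)" if "t \<in> {x..L}" for t
    using that False L cos_scaled_nonpos[of L t] by simp
  ultimately have "((\<lambda>t. \<bar>cos (pi * t / L)\<bar>) has_integral L/pi * sin (pi * x / L)) {x..L}"
    using has_integral_cong[of "{x..L}" "\<lambda>t. \<bar>cos (pi * t / L)\<bar>"] L by simp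
  then have "(\<integral>\<^sup>+t. ennreal (indicator {x..L} t * \<bar>cos (pi * t / L)\<bar>) \<partial>lborel)
      = ennreal (L/pi * sin (pi * x / L))"
    by (simp add: nn_integral_has_integral_lebesgue)
  moreover have "(\<integral>\<^sup>+t. ennreal (indicator {x<..L} t * \<bar>cos (pi * t / L)\<bar>) \<partial>lborel)
      = (\<integral>\<^sup>+t. ennreal (indicator {x..L} t * \<bar>cos (pi * t / L)\<bar>) \<partial>lborel)"
    using AE_lborel_singleton[of x]
    by (intro nn_integral_cong_AE) (auto elim!: eventually_mono simp: indicator_def)
  ultimately show ?thesis using False by (simp add: nearer_end_segment_def)
qed

lemma nn_integral_sin_over_nearer_end_segments:
  assumes L: "L > 0" and t: "t \<in> {0..L}"
  shows "(\<integral>\<^sup>+x. ennreal (indicator {0..L} x * indicator (nearer_end_segment L x) t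
                      * (L/pi * sin (pi * x / L))) \<partial>lborel)
    = ennreal ((L/pi)\<^sup>2 * \<bar>cos (pi * t / L)\<bar>)"
proof -
  have S_nonneg: "0 \<le> L/pi * sin (pi * x / L)" if "x \<in> {0..L}" for x
    using L that sin_scaled_nonneg[of L x] by simp
  show ?thesis
  proof (cases "t \<le> L/2")
    case True
    have "((\<lambda>x. L/pi * sin (pi * x / L)) has_integral
        (- (L/pi)\<^sup>2 * cos (pi * (L/2) / L) - - (L/pi)\<^sup>2 * cos (pi * t / L))) {t..L/2}"
      using True L by (intro has_integral_real_derivative has_real_derivative_cos_scaled)
    moreover have "- (L/pi)\<^sup>2 * cos (pi * (L/2) / L) - - (L/pi)\<^sup>2 * cos (pi * t / L)
        = (L/pi)\<^sup>2 * \<bar>cos (pi * t / L)\<bar>"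
      using L t True cos_scaled_nonneg[of L t] by simp
    ultimately have "(\<integral>\<^sup>+x. ennreal (indicator {t..L/2} x * (L/pi * sin (pi * x / L))) \<partial>lborel)
        = ennreal ((L/pi)\<^sup>2 * \<bar>cos (pi * t / L)\<bar>)"
      using L t by (intro nn_integral_has_integral_lebesgue) (use S_nonneg in auto)
    moreover have "indicator {0..L} x * indicator (nearer_end_segment L x) t
        = (indicator {t..L/2} x :: real)" for x
      using t True by (auto simp: nearer_end_segment_def indicator_def)
    ultimately show ?thesis by simp
  next
    case False
    have "((\<lambda>x. L/pi * sin (pi * x / L)) has_integral
        (- (L/pi)\<^sup>2 * cos (pi * t / L) - - (L/pi)\<^sup>2 * cos (pi * (L/2) / L))) {L/2..t}"
      using False L by (intro has_integral_real_derivative has_real_derivative_cos_scaled) auto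
    moreover have "- (L/pi)\<^sup>2 * cos (pi * t / L) - - (L/pi)\<^sup>2 * cos (pi * (L/2) / L)
        = (L/pi)\<^sup>2 * \<bar>cos (pi * t / L)\<bar>"
      using L t False cos_scaled_nonpos[of L t] by simp
    ultimately have "(\<integral>\<^sup>+x. ennreal (indicator {L/2..t} x * (L/pi * sin (pi * x / L))) \<partial>lborel)
        = ennreal ((L/pi)\<^sup>2 * \<bar>cos (pi * t / L)\<bar>)"
      using L t by (intro nn_integral_has_integral_lebesgue) (use S_nonneg in auto)
    moreover have "AE x in lborel. indicator {0..L} x * indicator (nearer_end_segment L x) t
        = (indicator {L/2..t} x :: real)"
      using AE_lborel_singleton[of "L/2"] AE_lborel_singleton[of t]
      by eventually_elim (use t False in \<open>auto simp: nearer_end_segment_def indicator_def\<close>)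
    ultimately show ?thesis
      by (subst nn_integral_cong_AE[where v="\<lambda>x. ennreal (indicator {L/2..t} x * (L/pi * sin (pi * x / L)))"])
        (auto elim!: eventually_mono)
  qed
qed

lemma H10_square_le_weighted_nearer_end:
  assumes L: "L > 0" and H: "H10 L u u'" and x: "x \<in> {0..L}"
  shows "ennreal ((u x)\<^sup>2) \<le> (\<integral>\<^sup>+t. ennreal (L/pi * sin (pi * x / L) * indicator (nearer_end_segment L x) t) *
    ennreal ((indicator {0..L} t * u' t)\<^sup>2 / \<bar>cos (pi * t / L)\<bar>) \<partial>lborel)"
proof -
  define D where "D = nearer_end_segment L x"
  define v where "v t = indicator {0..L} t * u' t" for t
  have [measurable]: "v \<in> borel_measurable borel"
    using H unfolding H10_def v_def by (blast dest: L2_borel_measurable)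
  have [measurable]: "D \<in> sets borel" "(\<lambda>t. \<bar>cos (pi * t / L)\<bar>) \<in> borel_measurable borel"
    by (auto simp: D_def nearer_end_segment_def intro!: borel_measurable_continuous_onI continuous_intros)
  have D: "D \<subseteq> {0..L}" "D \<in> sets lborel"
    using nearer_end_segment_subset[OF x] by (auto simp: D_def nearer_end_segment_def)
  have "set_integrable lborel {0..L} u'"
    using H L2_set_integrable unfolding H10_def by blast
  then have "set_integrable lborel {0..L} v"
    by (rule set_integrable_cong[THEN iffD1, rotated -1]) (auto simp: v_def)
  then have v_int: "set_integrable lborel D v"
    by (rule set_integrable_subset) (use D in auto)
  have "(u x)\<^sup>2 = (LINT t:D|lborel. u' t)\<^sup>2"
    using H10_abs_eq_integral_nearer_end[OF H x] unfolding D_def by (metis power2_abs)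
  also have "(LINT t:D|lborel. u' t) = (LINT t:D|lborel. v t)"
    using D by (intro set_lebesgue_integral_cong) (auto simp: v_def)
  finally have "ennreal ((u x)\<^sup>2) = ennreal ((LINT t:D|lborel. v t)\<^sup>2)" by simp
  also have "\<dots> \<le> (\<integral>\<^sup>+t. ennreal (indicator D t * \<bar>cos (pi * t / L)\<bar>) \<partial>lborel) *
      (\<integral>\<^sup>+t. ennreal (indicator D t * ((v t)\<^sup>2 / \<bar>cos (pi * t / L)\<bar>)) \<partial>lborel)"
  proof (rule set_integral_square_le_weighted[OF D(2) v_int])
    show "AE t in lborel. t \<in> D \<longrightarrow> 0 < \<bar>cos (pi * t / L)\<bar>"
      using AE_lborel_singleton[of "L/2"]
      by eventually_elim (use D L cos_scaled_nonzero in auto)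
  qed auto
  also have "(\<integral>\<^sup>+t. ennreal (indicator D t * \<bar>cos (pi * t / L)\<bar>) \<partial>lborel)
      = ennreal (L/pi * sin (pi * x / L))"
    unfolding D_def by (rule nn_integral_abs_cos_nearer_end_segment[OF L x])
  also have "ennreal (L/pi * sin (pi * x / L)) *
      (\<integral>\<^sup>+t. ennreal (indicator D t * ((v t)\<^sup>2 / \<bar>cos (pi * t / L)\<bar>)) \<partial>lborel)
    = (\<integral>\<^sup>+t. ennreal (L/pi * sin (pi * x / L) * indicator D t) *
        ennreal ((v t)\<^sup>2 / \<bar>cos (pi * t / L)\<bar>) \<partial>lborel)"
  proof -
    have S: "0 \<le> L/pi * sin (pi * x / L)" using sin_scaled_nonneg[OF L x] L by simp
    have r: "0 \<le> (v t)\<^sup>2 / \<bar>cos (pi * t / L)\<bar>" for t by simp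
    show ?thesis
      using D(2) by (subst nn_integral_cmult[symmetric])
        (simp_all only: ennreal_mult'[symmetric, OF S] ennreal_mult''[symmetric, OF r] mult.assoc,
         measurable)
  qed
  finally show ?thesis by (simp add: D_def v_def)
qed

lemma nn_integral_swap_nearer_end_kernel:
  fixes w :: "real \<Rightarrow> real"
  assumes L: "L > 0" and [measurable]: "w \<in> borel_measurable borel"
    and w_outside: "\<And>t. t \<notin> {0..L} \<Longrightarrow> w t = 0"
  shows "(\<integral>\<^sup>+x. \<integral>\<^sup>+t. ennreal (indicator {0..L} x * (L/pi * sin (pi * x / L) *
            indicator (nearer_end_segment L x) t)) * ennreal (w t) \<partial>lborel \<partial>lborel)
    = (\<integral>\<^sup>+t. ennreal ((L/pi)\<^sup>2 * \<bar>cos (pi * t / L)\<bar>) * ennreal (w t) \<partial>lborel)"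
proof -
  define K where "K x t = indicator {0..L} x * (L/pi * sin (pi * x / L) * indicator (nearer_end_segment L x) t)"
    for x t
  have K_measurable: "(\<lambda>(x, t). ennreal (K x t) * ennreal (w t)) \<in> borel_measurable (lborel \<Otimes>\<^sub>M lborel)"
    unfolding K_def indicator_nearer_end_segment by measurable
  have "(\<integral>\<^sup>+x. \<integral>\<^sup>+t. ennreal (K x t) * ennreal (w t) \<partial>lborel \<partial>lborel)
      = (\<integral>\<^sup>+t. \<integral>\<^sup>+x. ennreal (K x t) * ennreal (w t) \<partial>lborel \<partial>lborel)"
    using lborel_pair.Fubini'[OF K_measurable] by simp
  also have "\<dots> = (\<integral>\<^sup>+t. ennreal ((L/pi)\<^sup>2 * \<bar>cos (pi * t / L)\<bar>) * ennreal (w t) \<partial>lborel)"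
  proof (intro nn_integral_cong)
    fix t
    have "(\<integral>\<^sup>+x. ennreal (K x t) * ennreal (w t) \<partial>lborel) = (\<integral>\<^sup>+x. ennreal (K x t) \<partial>lborel) * ennreal (w t)"
      unfolding K_def indicator_nearer_end_segment by (intro nn_integral_multc) measurable
    also have "\<dots> = ennreal ((L/pi)\<^sup>2 * \<bar>cos (pi * t / L)\<bar>) * ennreal (w t)"
    proof (cases "t \<in> {0..L}")
      case True
      have "K x t = indicator {0..L} x * indicator (nearer_end_segment L x) t * (L/pi * sin (pi * x / L))" for x
        by (simp add: K_def mult_ac)
      then show ?thesis by (simp only: nn_integral_sin_over_nearer_end_segments[OF L True])
    qed (simp add: w_outside)
    finally show "(\<integral>\<^sup>+x. ennreal (K x t) * ennreal (w t) \<partial>lborel) = \<dots>" .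
  qed
  finally show ?thesis by (simp only: K_def)
qed

lemma poincare_nn_integral:
  assumes L: "L > 0" and H: "H10 L u u'"
  shows "(\<integral>\<^sup>+x. ennreal (indicator {0..L} x * (u x)\<^sup>2) \<partial>lborel)
    \<le> ennreal ((L/pi)\<^sup>2) * (\<integral>\<^sup>+x. ennreal (indicator {0..L} x * (u' x)\<^sup>2) \<partial>lborel)"
proof -
  define w where "w t = (indicator {0..L} t * u' t)\<^sup>2 / \<bar>cos (pi * t / L)\<bar>" for t
  have [measurable]: "(\<lambda>t. indicator {0..L} t * u' t) \<in> borel_measurable borel"
    using H unfolding H10_def by (blast dest: L2_borel_measurable)
  have [measurable]: "(\<lambda>t. \<bar>cos (pi * t / L)\<bar>) \<in> borel_measurable borel"
    by (auto intro!: borel_measurable_continuous_onI continuous_intros)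
  have [measurable]: "w \<in> borel_measurable borel"
    unfolding w_def by measurable
  have "(\<integral>\<^sup>+x. ennreal (indicator {0..L} x * (u x)\<^sup>2) \<partial>lborel)
      \<le> (\<integral>\<^sup>+x. \<integral>\<^sup>+t. ennreal (indicator {0..L} x * (L/pi * sin (pi * x / L) *
            indicator (nearer_end_segment L x) t)) * ennreal (w t) \<partial>lborel \<partial>lborel)"
  proof (rule nn_integral_mono)
    fix x
    show "ennreal (indicator {0..L} x * (u x)\<^sup>2) \<le> (\<integral>\<^sup>+t. ennreal (indicator {0..L} x *
        (L/pi * sin (pi * x / L) * indicator (nearer_end_segment L x) t)) * ennreal (w t) \<partial>lborel)"
      using H10_square_le_weighted_nearer_end[OF L H, of x]
      by (cases "x \<in> {0..L}") (simp_all add: w_def)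
  qed
  also have "\<dots> = (\<integral>\<^sup>+t. ennreal ((L/pi)\<^sup>2 * \<bar>cos (pi * t / L)\<bar>) * ennreal (w t) \<partial>lborel)"
    by (rule nn_integral_swap_nearer_end_kernel) (auto simp: L w_def)
  also have "\<dots> = (\<integral>\<^sup>+t. ennreal ((L/pi)\<^sup>2) * ennreal (indicator {0..L} t * (u' t)\<^sup>2) \<partial>lborel)"
    using AE_lborel_singleton[of "L/2"]
  proof (intro nn_integral_cong_AE, eventually_elim)
    case (elim t)
    show ?case
    proof (cases "t \<in> {0..L}")
      case True
      then have "\<bar>cos (pi * t / L)\<bar> > 0" using elim cos_scaled_nonzero[OF L True] by simp
      then show ?thesis
        using True by (simp add: w_def ennreal_mult[symmetric])
    qed (simp add: w_def)
  qed
  also have "\<dots> = ennreal ((L/pi)\<^sup>2) * (\<integral>\<^sup>+x. ennreal (indicator {0..L} x * (u' x)\<^sup>2) \<partial>lborel)"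
  proof (rule nn_integral_cmult)
    have "(\<lambda>x. (indicator {0..L} x * u' x)\<^sup>2) \<in> borel_measurable borel" by measurable
    moreover have "(indicator {0..L} x * u' x)\<^sup>2 = indicator {0..L} x * (u' x)\<^sup>2" for x
      by (simp add: indicator_def)
    ultimately show "(\<lambda>x. ennreal (indicator {0..L} x * (u' x)\<^sup>2)) \<in> borel_measurable lborel"
      by simp
  qed
  finally show ?thesis .
qed

lemma nrm2_le_poincare:
  assumes L: "L > 0" and H: "H10 L u u'"
  shows "nrm2 L u \<le> (L/pi)\<^sup>2 * nrm2 L u'"
proof -
  have "ennreal (nrm2 L u) \<le> ennreal ((L/pi)\<^sup>2) * ennreal (nrm2 L u')"
    using poincare_nn_integral[OF L H] H10_imp_L2[OF H] H
    by (simp add: nrm2_eq_nn_integral H10_def)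
  also have "\<dots> = ennreal ((L/pi)\<^sup>2 * nrm2 L u')" by (simp add: ennreal_mult')
  finally show ?thesis using nrm2_nonneg[of L u'] by (subst (asm) ennreal_le_iff) auto
qed

lemma equilibrium_H10:
  assumes "equilibrium L b k k0 l f1 f2 f3 \<phi> \<phi>' \<psi> \<psi>' w w'"
  shows "H10 L \<phi> \<phi>'" "H10 L \<psi> \<psi>'" "H10 L w w'"
  using assms unfolding equilibrium_def by auto

lemma continuous_on_compose_H10:
  assumes f: "continuous_on UNIV f" and "H10 L \<phi> \<phi>'" "H10 L \<psi> \<psi>'" "H10 L w w'"
  shows "L2 L (\<lambda>x. f (\<phi> x, \<psi> x, w x))"
  using assms(2-4)
  by (intro continuous_on_imp_L2 continuous_on_compose2[OF f] continuous_on_Pair H10_continuous_on)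
    auto

lemma equilibrium_energy_identity:
  fixes f1 f2 f3 :: "real \<times> real \<times> real \<Rightarrow> real"
  assumes eq: "equilibrium L b k k0 l f1 f2 f3 \<phi> \<phi>' \<psi> \<psi>' w w'"
    and f: "continuous_on UNIV f1" "continuous_on UNIV f2" "continuous_on UNIV f3"
  defines "G \<equiv> \<lambda>x. f1 (\<phi> x, \<psi> x, w x) * \<phi> x + f2 (\<phi> x, \<psi> x, w x) * \<psi> x + f3 (\<phi> x, \<psi> x, w x) * w x"
  shows "set_integrable lborel {0..L} G"
    and "b * nrm2 L \<psi>' + k * nrm2 L (\<lambda>x. \<phi>' x + \<psi> x + l * w x) + k0 * nrm2 L (\<lambda>x. w' x - l * \<phi> x)
         + (LINT x:{0..L}|lborel. G x) = 0"
proof -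
  define P where "P x = \<phi>' x + \<psi> x + l * w x" for x
  define Q where "Q x = w' x - l * \<phi> x" for x
  define h1 h2 h3 where "h1 x = f1 (\<phi> x, \<psi> x, w x)" and "h2 x = f2 (\<phi> x, \<psi> x, w x)"
    and "h3 x = f3 (\<phi> x, \<psi> x, w x)" for x
  note H = equilibrium_H10[OF eq]
  have L2: "L2 L \<phi>" "L2 L \<psi>" "L2 L w" "L2 L \<phi>'" "L2 L \<psi>'" "L2 L w'"
    "L2 L h1" "L2 L h2" "L2 L h3"
    using H H10_imp_L2 continuous_on_compose_H10[OF _ H] f
    unfolding h1_def h2_def h3_def by (auto simp: H10_def)
  then have L2_PQ: "L2 L P" "L2 L Q"
    unfolding P_def Q_def by (auto intro!: L2_add L2_diff L2_cmult)
  show G_int: "set_integrable lborel {0..L} G"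
    unfolding G_def using L2 unfolding h1_def h2_def h3_def
    by (intro set_integral_add(1) L2_mult_set_integrable)
  have i1: "set_integrable lborel {0..L} (\<lambda>x. k * P x * \<phi>' x - k0 * l * Q x * \<phi> x + h1 x * \<phi> x)"
    and i2: "set_integrable lborel {0..L} (\<lambda>x. b * \<psi>' x * \<psi>' x + k * P x * \<psi> x + h2 x * \<psi> x)"
    and i3: "set_integrable lborel {0..L} (\<lambda>x. k0 * Q x * w' x + k * l * P x * w x + h3 x * w x)"
    using L2 L2_PQ
    by (auto intro!: set_integral_add(1) set_integral_diff(1) L2_mult_set_integrable L2_cmult)
  have iE: "set_integrable lborel {0..L} (\<lambda>x. (\<psi>' x)\<^sup>2)" "set_integrable lborel {0..L} (\<lambda>x. (P x)\<^sup>2)"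
      "set_integrable lborel {0..L} (\<lambda>x. (Q x)\<^sup>2)"
    using L2 L2_PQ unfolding L2_def by auto
  have "0 = (LINT x:{0..L}|lborel. k * P x * \<phi>' x - k0 * l * Q x * \<phi> x + h1 x * \<phi> x)
         + (LINT x:{0..L}|lborel. b * \<psi>' x * \<psi>' x + k * P x * \<psi> x + h2 x * \<psi> x)
         + (LINT x:{0..L}|lborel. k0 * Q x * w' x + k * l * P x * w x + h3 x * w x)"
    using eq H unfolding equilibrium_def by (simp only: P_def Q_def h1_def h2_def h3_def)
  also have "\<dots> = (LINT x:{0..L}|lborel. (k * P x * \<phi>' x - k0 * l * Q x * \<phi> x + h1 x * \<phi> x)
         + (b * \<psi>' x * \<psi>' x + k * P x * \<psi> x + h2 x * \<psi> x)
         + (k0 * Q x * w' x + k * l * P x * w x + h3 x * w x))"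
    using i1 i2 i3 by (simp add: set_integral_add)
  also have "\<dots> = (LINT x:{0..L}|lborel. (b * (\<psi>' x)\<^sup>2 + k * (P x)\<^sup>2 + k0 * (Q x)\<^sup>2) + G x)"
    by (intro set_lebesgue_integral_cong)
      (auto simp: P_def Q_def G_def h1_def h2_def h3_def power2_eq_square algebra_simps)
  also have "\<dots> = b * nrm2 L \<psi>' + k * nrm2 L P + k0 * nrm2 L Q + (LINT x:{0..L}|lborel. G x)"
    using iE G_int unfolding nrm2_def by (simp add: set_integral_add)
  finally show "b * nrm2 L \<psi>' + k * nrm2 L (\<lambda>x. \<phi>' x + \<psi> x + l * w x)
      + k0 * nrm2 L (\<lambda>x. w' x - l * \<phi> x) + (LINT x:{0..L}|lborel. G x) = 0"
    unfolding P_def[abs_def] Q_def[abs_def] by simp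
qed

lemma equilibrium_energy_le:
  fixes F f1 f2 f3 :: "real \<times> real \<times> real \<Rightarrow> real"
  assumes eq: "equilibrium L b k k0 l f1 f2 f3 \<phi> \<phi>' \<psi> \<psi>' w w'" and L: "0 \<le> L"
    and f: "continuous_on UNIV f1" "continuous_on UNIV f2" "continuous_on UNIV f3"
    and F_lower: "\<And>u v w. F (u, v, w) \<ge> - \<beta> * (u\<^sup>2 + v\<^sup>2 + w\<^sup>2) - mF"
    and F_Euler: "\<And>u v w. (f1 (u, v, w), f2 (u, v, w), f3 (u, v, w)) \<bullet> (u, v, w) - F (u, v, w)
                          \<ge> - \<beta> * (u\<^sup>2 + v\<^sup>2 + w\<^sup>2) - mF"
  shows "b * nrm2 L \<psi>' + k * nrm2 L (\<lambda>x. \<phi>' x + \<psi> x + l * w x) + k0 * nrm2 L (\<lambda>x. w' x - l * \<phi> x)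
    \<le> 2 * \<beta> * (nrm2 L \<phi> + nrm2 L \<psi> + nrm2 L w) + 2 * mF * L"
proof -
  define G where "G x = f1 (\<phi> x, \<psi> x, w x) * \<phi> x + f2 (\<phi> x, \<psi> x, w x) * \<psi> x
    + f3 (\<phi> x, \<psi> x, w x) * w x" for x
  define Sq where "Sq x = (\<phi> x)\<^sup>2 + (\<psi> x)\<^sup>2 + (w x)\<^sup>2" for x
  define B where "B x = (- 2 * \<beta>) * Sq x - 2 * mF" for x
  note energy = equilibrium_energy_identity[OF eq f, folded G_def[abs_def]]
  have "B x \<le> G x" for x
    using F_Euler[of "\<phi> x" "\<psi> x" "w x"] F_lower[of "\<phi> x" "\<psi> x" "w x"]
    by (simp add: B_def Sq_def G_def mult.commute)
  have u2: "set_integrable lborel {0..L} (\<lambda>x. (\<phi> x)\<^sup>2)" "set_integrable lborel {0..L} (\<lambda>x. (\<psi> x)\<^sup>2)"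
    "set_integrable lborel {0..L} (\<lambda>x. (w x)\<^sup>2)"
    using H10_imp_L2 equilibrium_H10[OF eq] unfolding L2_def by auto
  then have Sq_int: "set_integrable lborel {0..L} Sq"
    unfolding Sq_def by (intro set_integral_add(1))
  have B_int: "set_integrable lborel {0..L} B"
    unfolding B_def by (intro set_integral_diff(1) set_integrable_mult_right Sq_int set_integrable_const_Icc)
  have "(LINT x:{0..L}|lborel. B x)
      = (LINT x:{0..L}|lborel. (- 2 * \<beta>) * Sq x) - (LINT x:{0..L}|lborel. 2 * mF)"
    unfolding B_def
    by (rule set_integral_diff(2)[OF set_integrable_mult_right[OF Sq_int] set_integrable_const_Icc])
  also have "\<dots> = (- 2 * \<beta>) * (LINT x:{0..L}|lborel. Sq x) - 2 * mF * L"
    by (simp only: set_integral_mult_right set_integral_const_Icc[OF L]) simp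
  also have "(LINT x:{0..L}|lborel. Sq x) = nrm2 L \<phi> + nrm2 L \<psi> + nrm2 L w"
    using u2 unfolding nrm2_def Sq_def by (simp add: set_integral_add)
  finally have "(LINT x:{0..L}|lborel. B x) = - 2 * \<beta> * (nrm2 L \<phi> + nrm2 L \<psi> + nrm2 L w) - 2 * mF * L" .
  moreover have "(LINT x:{0..L}|lborel. B x) \<le> (LINT x:{0..L}|lborel. G x)"
    using B_int energy(1) \<open>\<And>x. B x \<le> G x\<close> by (intro set_integral_mono)
  ultimately show ?thesis using energy(2) by linarith
qed

lemma absorption_bound:
  fixes E N M a g c \<beta> :: real
  assumes E: "E \<le> \<beta> * N + c" and N: "N \<le> a * M" and M: "M \<le> g * E"
    and nonneg: "0 \<le> \<beta>" "0 \<le> a" "0 \<le> g" and small: "\<beta> * a * g < 1"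
  shows "N + M \<le> (a + 1) * g * c / (1 - \<beta> * a * g)"
proof -
  have "E \<le> \<beta> * (a * (g * E)) + c"
    using E mult_left_mono[OF order_trans[OF N mult_left_mono[OF M]]] nonneg by fastforce
  then have "(1 - \<beta> * a * g) * E \<le> c" by (simp add: algebra_simps)
  then have E_le: "E \<le> c / (1 - \<beta> * a * g)" using small by (simp add: le_divide_eq mult.commute)
  have "N + M \<le> (a + 1) * (g * E)"
    using N mult_left_mono[OF M, of "a + 1"] nonneg by (simp add: algebra_simps)
  also have "\<dots> \<le> (a + 1) * (g * (c / (1 - \<beta> * a * g)))"
    using E_le nonneg by (intro mult_left_mono) auto
  finally show ?thesis by simp
qed

theorem lemma4p4:
  fixes L \<rho>1 \<rho>2 b k k0 l \<gamma>3 \<beta> mF p Cf :: real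
    and F f1 f2 f3 :: "real \<times> real \<times> real \<Rightarrow> real"
    and Df1 Df2 Df3 :: "real \<times> real \<times> real \<Rightarrow> real \<times> real \<times> real"
    and g1 g2 g3 g1' g2' g3' :: "real \<Rightarrow> real"
    and m1 m2 m3 M1 M2 M3 :: real
  assumes pos: "L > 0" "\<rho>1 > 0" "\<rho>2 > 0" "b > 0" "k > 0" "k0 > 0" "l > 0"
    and gamma3: "\<gamma>3 > 0"
      "\<And>\<phi> \<phi>' \<psi> \<psi>' w w'. H10 L \<phi> \<phi>' \<Longrightarrow> H10 L \<psi> \<psi>' \<Longrightarrow> H10 L w w' \<Longrightarrow>
         nrm2 L \<phi>' + nrm2 L \<psi>' + nrm2 L w' \<le>
         \<gamma>3 * (b * nrm2 L \<psi>' + k * nrm2 L (\<lambda>x. \<phi>' x + \<psi> x + l * w x)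
                + k0 * nrm2 L (\<lambda>x. w' x - l * \<phi> x))"
    and F1: "\<And>z. (F has_derivative (\<lambda>h. (f1 z, f2 z, f3 z) \<bullet> h)) (at z)"
      "\<And>z. (f1 has_derivative (\<lambda>h. Df1 z \<bullet> h)) (at z)"
      "\<And>z. (f2 has_derivative (\<lambda>h. Df2 z \<bullet> h)) (at z)"
      "\<And>z. (f3 has_derivative (\<lambda>h. Df3 z \<bullet> h)) (at z)"
      "continuous_on UNIV Df1" "continuous_on UNIV Df2" "continuous_on UNIV Df3"
    and F2: "\<beta> \<ge> 0" "mF \<ge> 0" "\<beta> < pi\<^sup>2 / (2 * \<gamma>3 * L\<^sup>2)"
      "\<And>u v w. F (u, v, w) \<ge> - \<beta> * (u\<^sup>2 + v\<^sup>2 + w\<^sup>2) - mF"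
    and F3: "p \<ge> 1" "Cf > 0"
      "\<And>u v w. norm (Df1 (u, v, w)) \<le> Cf * (1 + apow u (p - 1) + apow v (p - 1) + apow w (p - 1))"
      "\<And>u v w. norm (Df2 (u, v, w)) \<le> Cf * (1 + apow u (p - 1) + apow v (p - 1) + apow w (p - 1))"
      "\<And>u v w. norm (Df3 (u, v, w)) \<le> Cf * (1 + apow u (p - 1) + apow v (p - 1) + apow w (p - 1))"
    and F4: "\<And>u v w. (f1 (u, v, w), f2 (u, v, w), f3 (u, v, w)) \<bullet> (u, v, w) - F (u, v, w)
                        \<ge> - \<beta> * (u\<^sup>2 + v\<^sup>2 + w\<^sup>2) - mF"
    and G1: "\<And>s. (g1 has_real_derivative g1' s) (at s)" "continuous_on UNIV g1'"
      "\<And>s. (g2 has_real_derivative g2' s) (at s)" "continuous_on UNIV g2'"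
      "\<And>s. (g3 has_real_derivative g3' s) (at s)" "continuous_on UNIV g3'"
      "mono g1" "mono g2" "mono g3" "g1 0 = 0" "g2 0 = 0" "g3 0 = 0"
    and G2: "m1 > 0" "m2 > 0" "m3 > 0" "M1 > 0" "M2 > 0" "M3 > 0"
      "\<And>s. \<bar>s\<bar> > 1 \<Longrightarrow> m1 * s\<^sup>2 \<le> g1 s * s \<and> g1 s * s \<le> M1 * s\<^sup>2"
      "\<And>s. \<bar>s\<bar> > 1 \<Longrightarrow> m2 * s\<^sup>2 \<le> g2 s * s \<and> g2 s * s \<le> M2 * s\<^sup>2"
      "\<And>s. \<bar>s\<bar> > 1 \<Longrightarrow> m3 * s\<^sup>2 \<le> g3 s * s \<and> g3 s * s \<le> M3 * s\<^sup>2"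
  shows "\<exists>R. \<forall>\<phi> \<phi>' \<psi> \<psi>' w w'.
           equilibrium L b k k0 l f1 f2 f3 \<phi> \<phi>' \<psi> \<psi>' w w' \<longrightarrow>
           nrm2 L \<phi> + nrm2 L \<phi>' + nrm2 L \<psi> + nrm2 L \<psi>' + nrm2 L w + nrm2 L w' \<le> R"
proof -
  (* Equilibria do not see \<rho>1, \<rho>2, the dampings g_i or the growth bound (F3);
     those hypotheses only matter for the dynamics. *)
  define a where "a = (L/pi)\<^sup>2"
  define \<theta> where "\<theta> = 2 * \<beta> * a * \<gamma>3"
  have "\<theta> = \<beta> * (2 * \<gamma>3 * L\<^sup>2) / pi\<^sup>2" by (simp add: \<theta>_def a_def power_divide)
  moreover have "\<beta> * (2 * \<gamma>3 * L\<^sup>2) < pi\<^sup>2" using F2(3) pos(1) gamma3(1) by (simp add: less_divide_eq)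
  ultimately have small: "\<theta> < 1" by (simp add: divide_less_eq)
  have f: "continuous_on UNIV f1" "continuous_on UNIV f2" "continuous_on UNIV f3"
    using F1(2-4) by (auto intro!: continuous_at_imp_continuous_on has_derivative_continuous)
  show ?thesis
  proof (intro exI allI impI)
    fix \<phi> \<phi>' \<psi> \<psi>' w w'
    assume eq: "equilibrium L b k k0 l f1 f2 f3 \<phi> \<phi>' \<psi> \<psi>' w w'"
    note H = equilibrium_H10[OF eq]
    have "nrm2 L \<phi> + nrm2 L \<psi> + nrm2 L w + (nrm2 L \<phi>' + nrm2 L \<psi>' + nrm2 L w')
        \<le> (a + 1) * \<gamma>3 * (2 * mF * L) / (1 - \<theta>)"
      unfolding \<theta>_def
    proof (rule absorption_bound)
      show "nrm2 L \<phi> + nrm2 L \<psi> + nrm2 L w \<le> a * (nrm2 L \<phi>' + nrm2 L \<psi>' + nrm2 L w')"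
        using nrm2_le_poincare[OF pos(1) H(1)] nrm2_le_poincare[OF pos(1) H(2)]
          nrm2_le_poincare[OF pos(1) H(3)] unfolding a_def by (simp add: algebra_simps)
    qed (use equilibrium_energy_le[OF eq _ f F2(4) F4] gamma3(2)[OF H] gamma3(1) pos F2 small
        in \<open>auto simp: \<theta>_def a_def\<close>)
    then show "nrm2 L \<phi> + nrm2 L \<phi>' + nrm2 L \<psi> + nrm2 L \<psi>' + nrm2 L w + nrm2 L w'
        \<le> (a + 1) * \<gamma>3 * (2 * mF * L) / (1 - \<theta>)"
      by (simp add: algebra_simps)
  qed
qed

end
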